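(* Let $A\in\mathcal{PM}(n)$ be the poset matrix of an NL poset $P$ on $X_n$, let $T$ be the set of order ideals of $P$, let $S\in T$, and let $v\in\{0,1\}^n$ be the characteristic vector of $S$. Then $$\mathrm{Grow}_S(T)=\mathcal I(P_{A^v}),$$ the set of order ideals of the NL poset on $X_{n+1}$ whose poset matrix is $A^v=\begin{bmatrix}A&\mathbf 0\\ v&1\end{bmatrix}$.
   Context: Let $X_n=\{0,1,\ldots,n-1\}$. A naturally labeled (NL) poset on $X_n$ is a partial order $\preceq$ on $X_n$ such that $x\preceq y$ implies $x\le y$ in the usual integer order. Its poset matrix is the $n\times n$ $(0,1)$-matrix $A=(a_{i,j})_{i,j\in X_n}$ with $a_{i,j}=1$ if $j\preceq i$ and $0$ otherwise; $\mathcal{PM}(n)$ is the set of all such matrices. An order ideal is a downward closed subset. For a family $T$ of subsets of $X_n$ (closed under union and intersection, containing $\emptyset$ and $X_n$) and $S\in T$, $\mathrm{Grow}_S(T)$ is the family of subsets of $X_{n+1}$ obtained by doubling the interval $[S,X_n]$ of $T$, namely $\mathrm{Grow}_S(T)=T\cup\{U\cup\{n\}: U\in T,\ S\subseteq U\}$. *)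

theory Defs
  imports Main
begin

definition NL_poset :: "nat \<Rightarrow> (nat \<Rightarrow> nat \<Rightarrow> bool) \<Rightarrow> bool" where
  "NL_poset n le \<longleftrightarrow>
     (\<forall>x y. le x y \<longrightarrow> x < n \<and> y < n) \<and>
     (\<forall>x<n. le x x) \<and>
     (\<forall>x y. le x y \<and> le y x \<longrightarrow> x = y) \<and>
     (\<forall>x y z. le x y \<and> le y z \<longrightarrow> le x z) \<and>
     (\<forall>x y. le x y \<longrightarrow> x \<le> y)"

text \<open>n x n (0,1)-matrices are functions nat => nat => nat, entries outside
  the index range X_n being 0.  Poset matrix: a_{i,j} = 1 iff j precedes i.\<close>
definition poset_matrix :: "nat \<Rightarrow> (nat \<Rightarrow> nat \<Rightarrow> bool) \<Rightarrow> nat \<Rightarrow> nat \<Rightarrow> nat" where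
  "poset_matrix n le = (\<lambda>i j. if i < n \<and> j < n \<and> le j i then 1 else 0)"

definition PM :: "nat \<Rightarrow> (nat \<Rightarrow> nat \<Rightarrow> nat) set" where
  "PM n = {poset_matrix n le | le. NL_poset n le}"

definition matrix_poset :: "nat \<Rightarrow> (nat \<Rightarrow> nat \<Rightarrow> nat) \<Rightarrow> nat \<Rightarrow> nat \<Rightarrow> bool" where
  "matrix_poset n A = (\<lambda>j i. i < n \<and> j < n \<and> A i j = 1)"

definition order_ideals :: "nat \<Rightarrow> (nat \<Rightarrow> nat \<Rightarrow> bool) \<Rightarrow> nat set set" where
  "order_ideals n le = {S. S \<subseteq> {..<n} \<and> (\<forall>x y. le x y \<and> y \<in> S \<longrightarrow> x \<in> S)}"

definition char_vec :: "nat \<Rightarrow> nat set \<Rightarrow> nat \<Rightarrow> nat" where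
  "char_vec n S = (\<lambda>j. if j < n \<and> j \<in> S then 1 else 0)"

text \<open>A^v = [[A, 0], [v, 1]] of size (n+1) x (n+1).\<close>
definition extend_matrix :: "nat \<Rightarrow> (nat \<Rightarrow> nat \<Rightarrow> nat) \<Rightarrow> (nat \<Rightarrow> nat) \<Rightarrow> nat \<Rightarrow> nat \<Rightarrow> nat" where
  "extend_matrix n A v = (\<lambda>i j.
     if i < n \<and> j < n then A i j
     else if i = n \<and> j < n then v j
     else if i = n \<and> j = n then 1 else 0)"

definition Grow :: "nat \<Rightarrow> nat set \<Rightarrow> nat set set \<Rightarrow> nat set set" where
  "Grow n S T = T \<union> {insert n U | U. U \<in> T \<and> S \<subseteq> U}"

end

theory Submission
  imports Defs
begin

text \<open>The poset with matrix A^v is P with a new top-labelled element n placed exactly above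
  the elements of S.  An order ideal of it either avoids n, and is then an order ideal of P,
  or contains n, and is then an order ideal of P containing S together with n.\<close>

definition grow_poset :: "nat \<Rightarrow> (nat \<Rightarrow> nat \<Rightarrow> bool) \<Rightarrow> nat set \<Rightarrow> nat \<Rightarrow> nat \<Rightarrow> bool" where
  "grow_poset n P S = (\<lambda>x y. P x y \<or> (x \<in> S \<and> y = n) \<or> (x = n \<and> y = n))"

lemma matrix_poset_poset_matrix:
  assumes "\<And>x y. P x y \<Longrightarrow> x < n \<and> y < n"
  shows "matrix_poset n (poset_matrix n P) = P"
  using assms by (auto simp: matrix_poset_def poset_matrix_def)

lemma extend_matrix_poset_matrix:
  assumes "\<And>x y. P x y \<Longrightarrow> x < n \<and> y < n" and "S \<subseteq> {..<n}"
  shows "extend_matrix n (poset_matrix n P) (char_vec n S) = poset_matrix (Suc n) (grow_poset n P S)"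
  using assms
  by (fastforce simp: extend_matrix_def poset_matrix_def char_vec_def grow_poset_def less_Suc_eq)

lemma NL_poset_grow_poset:
  assumes "NL_poset n P" and "S \<in> order_ideals n P"
  shows "NL_poset (Suc n) (grow_poset n P S)"
proof -
  have supp: "\<And>x y. P x y \<Longrightarrow> x < n \<and> y < n"
    and refl: "\<And>x. x < n \<Longrightarrow> P x x"
    and antisym: "\<And>x y. P x y \<Longrightarrow> P y x \<Longrightarrow> x = y"
    and trans: "\<And>x y z. P x y \<Longrightarrow> P y z \<Longrightarrow> P x z"
    and natural: "\<And>x y. P x y \<Longrightarrow> x \<le> y"
    using assms(1) unfolding NL_poset_def by blast+
  have S_sub: "S \<subseteq> {..<n}" and S_down: "\<And>x y. P x y \<Longrightarrow> y \<in> S \<Longrightarrow> x \<in> S"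
    using assms(2) unfolding order_ideals_def by blast+
  show ?thesis
    unfolding NL_poset_def
  proof (intro conjI allI impI)
    fix x y z
    assume "grow_poset n P S x y \<and> grow_poset n P S y z"
    then show "grow_poset n P S x z"
      using supp trans S_down unfolding grow_poset_def by blast
  next
    fix x y
    assume "grow_poset n P S x y \<and> grow_poset n P S y x"
    then show "x = y"
      using supp antisym S_sub unfolding grow_poset_def by blast
  qed (use supp refl natural S_sub in \<open>auto simp: grow_poset_def less_Suc_eq\<close>)
qed

lemma order_ideals_grow_poset:
  assumes supp: "\<And>x y. P x y \<Longrightarrow> x < n \<and> y < n" and "S \<subseteq> {..<n}"
  shows "order_ideals (Suc n) (grow_poset n P S) = Grow n S (order_ideals n P)"
proof (intro set_eqI iffI)
  fix U
  assume "U \<in> Grow n S (order_ideals n P)"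
  then show "U \<in> order_ideals (Suc n) (grow_poset n P S)"
    using assms unfolding Grow_def order_ideals_def grow_poset_def by fastforce
next
  fix U
  assume U: "U \<in> order_ideals (Suc n) (grow_poset n P S)"
  then have "U - {n} \<in> order_ideals n P"
    using supp by (fastforce simp: order_ideals_def grow_poset_def less_Suc_eq)
  moreover have "S \<subseteq> U - {n}" if "n \<in> U"
    using U that \<open>S \<subseteq> {..<n}\<close> by (fastforce simp: order_ideals_def grow_poset_def)
  ultimately show "U \<in> Grow n S (order_ideals n P)"
    unfolding Grow_def by (cases "n \<in> U") (auto simp: insert_absorb)
qed

theorem theorem5p9:
  fixes n :: nat and P :: "nat \<Rightarrow> nat \<Rightarrow> bool" and A :: "nat \<Rightarrow> nat \<Rightarrow> nat"
    and T :: "nat set set" and S :: "nat set" and v :: "nat \<Rightarrow> nat"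
  assumes "NL_poset n P"
    and "A = poset_matrix n P"
    and "T = order_ideals n P"
    and "S \<in> T"
    and "v = char_vec n S"
  shows "extend_matrix n A v \<in> PM (Suc n) \<and>
         Grow n S T = order_ideals (Suc n) (matrix_poset (Suc n) (extend_matrix n A v))"
proof -
  have supp: "\<And>x y. P x y \<Longrightarrow> x < n \<and> y < n"
    using assms(1) unfolding NL_poset_def by blast
  have S_sub: "S \<subseteq> {..<n}"
    using assms(4) unfolding assms(3) order_ideals_def by blast
  have grow_NL: "NL_poset (Suc n) (grow_poset n P S)"
    using assms(4) unfolding assms(3) by (rule NL_poset_grow_poset[OF assms(1)])
  have grow_supp: "\<And>x y. grow_poset n P S x y \<Longrightarrow> x < Suc n \<and> y < Suc n"
    using supp S_sub unfolding grow_poset_def by fastforce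
  have E: "extend_matrix n A v = poset_matrix (Suc n) (grow_poset n P S)"
    using extend_matrix_poset_matrix[OF supp S_sub] assms(2,5) by simp
  have Q: "matrix_poset (Suc n) (extend_matrix n A v) = grow_poset n P S"
    unfolding E using grow_supp by (rule matrix_poset_poset_matrix)
  have "extend_matrix n A v \<in> PM (Suc n)"
    unfolding E PM_def using grow_NL by blast
  moreover have "Grow n S T = order_ideals (Suc n) (matrix_poset (Suc n) (extend_matrix n A v))"
    unfolding Q assms(3) by (rule order_ideals_grow_poset[OF supp S_sub, symmetric])
  ultimately show ?thesis ..
qed

end
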